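(* In the database model described in the context, let $\mathbf r=(r_1,\dots,r_N)$ satisfy $P(\mathbf{LR}_{\mathcal D}=\mathbf r)>0$, set $r_0=1$, and let $1\le i\le N$ with $0<\pi_i<1$. Then \[ \frac{P(R=i\mid \mathbf{LR}_{\mathcal D}=\mathbf r)}{P(R\ne i\mid \mathbf{LR}_{\mathcal D}=\mathbf r)}=\frac{r_i\pi_i}{\sum_{k=0,\,k\ne i}^N r_k\pi_k}, \] and, whenever the denominators are nonzero, the likelihood ratio in favour of $R=i$ is \[ \frac{P(\mathbf{LR}_{\mathcal D}=\mathbf r\mid R=i)}{P(\mathbf{LR}_{\mathcal D}=\mathbf r\mid R\ne i)}=\frac{r_i(1-\pi_i)}{\sum_{k=1,\,k\ne i}^N r_k\pi_k+\pi_0}. \]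
   Context: Let $E$ be a countable set and let $S$, $G$ be $E$-valued random variables such that for every $e\in E$, $P(S=e)>0$ implies $P(G=e)>0$. For $e\in E$ define the likelihood ratio $LR(e)=P(S=e)/P(G=e)$ if $P(G=e)>0$ and $LR(e)=0$ otherwise. Database model: fix $N\ge1$. Let $R$ be a random variable with values in $\{0,1,\dots,N\}$; we write $R\in\mathcal D$ for $R\in\{1,\dots,N\}$ and $R\notin\mathcal D$ for $R=0$. Put $\pi_i=P(R=i)$ for $1\le i\le N$, $\pi_{\mathcal D}=\sum_{i=1}^N\pi_i$ and $\pi_0=1-\pi_{\mathcal D}=P(R=0)$. There are $E$-valued random variables $P_1,\dots,P_N$ such that conditionally on $R=i$ with $1\le i\le N$, they are independent, $P_i$ has the distribution of $S$ and $P_j$ ($j\ne i$) has the distribution of $G$; and conditionally on $R=0$ they are independent, each with the distribution of $G$. Set $\mathbf{LR}_{\mathcal D}=(LR(P_1),\dots,LR(P_N))$. *)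

theory Defs
  imports "HOL-Probability.Probability"
begin

definition pt_prob :: "'b measure \<Rightarrow> ('b \<Rightarrow> 'e) \<Rightarrow> 'e \<Rightarrow> real" where
  "pt_prob M X e = measure M {x \<in> space M. X x = e}"

definition LR :: "'b measure \<Rightarrow> ('b \<Rightarrow> 'e) \<Rightarrow> 'c measure \<Rightarrow> ('c \<Rightarrow> 'e) \<Rightarrow> 'e \<Rightarrow> real" where
  "LR Ms S Mg G e = (if pt_prob Mg G e > 0 then pt_prob Ms S e / pt_prob Mg G e else 0)"

definition cprob :: "'a measure \<Rightarrow> 'a set \<Rightarrow> 'a set \<Rightarrow> real" where
  "cprob M A B = measure M (A \<inter> B) / measure M B"

end

theory Submission
  imports Defs
begin

(* Fix the observed likelihood-ratio vector r and let B be the event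
   LR(P_j) = r_j for all j.  B splits into the countably many disjoint events
   "R = k and (P_1,...,P_N) = e", where e ranges over the profiles compatible with r.
   Since P(S = x) = LR(x) P(G = x) for every x, the model equations give each of these
   events the probability  w_k * g(e),  with w_0 = pi_0, w_k = r_k pi_k and
   g(e) = prod_j P(G = e_j).  Summing over e yields the key identity
        P(R \<in> K, B) = (sum_{k \<in> K} w_k) * q      for all K \<subseteq> {0..N},
   with a constant q > 0 independent of K.  Both claimed formulas are then Bayes-type
   algebra: q cancels, and P(R \<noteq> i) = 1 - pi_i. *)

lemma pt_prob_nonneg: "pt_prob M X x \<ge> 0"
  unfolding pt_prob_def by simp

lemma LR_nonneg: "LR Ms S Mg G x \<ge> 0"
  unfolding LR_def by (simp add: pt_prob_nonneg)

lemma pt_prob_eq_LR_mult: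
  assumes "\<And>e. pt_prob Ms S e > 0 \<Longrightarrow> pt_prob Mg G e > 0"
  shows "pt_prob Ms S x = LR Ms S Mg G x * pt_prob Mg G x"
proof (cases "pt_prob Mg G x > 0")
  case True
  then show ?thesis unfolding LR_def by simp
next
  case False
  then have "pt_prob Ms S x = 0"
    using assms pt_prob_nonneg[of Ms S x] by force
  then show ?thesis using False unfolding LR_def by simp
qed

lemma measure_countable_UN_scaled:
  assumes "finite_measure M" and "countable T"
    and "\<And>e. e \<in> T \<Longrightarrow> X e \<in> sets M" and "disjoint_family_on X T"
    and "\<And>e. e \<in> T \<Longrightarrow> measure M (X e) = c * g e"
    and "c \<ge> 0" and "\<And>e. g e \<ge> 0"
  shows "measure M (\<Union>e\<in>T. X e) = c * enn2real (\<integral>\<^sup>+e. ennreal (g e) \<partial>count_space T)"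
proof -
  interpret finite_measure M by fact
  have "emeasure M (\<Union>e\<in>T. X e) = (\<integral>\<^sup>+e. emeasure M (X e) \<partial>count_space T)"
    using assms(3,2,4) by (rule emeasure_UN_countable)
  also have "\<dots> = (\<integral>\<^sup>+e. ennreal c * ennreal (g e) \<partial>count_space T)"
    using assms(5-7) by (intro nn_integral_cong) (simp add: emeasure_eq_measure ennreal_mult)
  also have "\<dots> = ennreal c * (\<integral>\<^sup>+e. ennreal (g e) \<partial>count_space T)"
    by (rule nn_integral_cmult) simp
  finally have "measure M (\<Union>e\<in>T. X e)
      = enn2real (ennreal c * (\<integral>\<^sup>+e. ennreal (g e) \<partial>count_space T))"
    by (metis emeasure_eq_measure enn2real_ennreal measure_nonneg)
  then show ?thesis
    using assms(6) by (simp add: enn2real_mult)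
qed

lemma cprob_ratio_same_condition:
  assumes "measure M B \<noteq> 0"
  shows "cprob M A B / cprob M C B = measure M (A \<inter> B) / measure M (C \<inter> B)"
  using assms unfolding cprob_def by simp

locale database_model = prob_space M
  for M :: "'a measure"
  and Ms :: "'b measure" and S :: "'b \<Rightarrow> 'e::countable"
  and Mg :: "'c measure" and G :: "'c \<Rightarrow> 'e"
  and R :: "'a \<Rightarrow> nat" and P :: "nat \<Rightarrow> 'a \<Rightarrow> 'e" and N :: nat +
  assumes S_abs_cont_G: "\<And>e. pt_prob Ms S e > 0 \<Longrightarrow> pt_prob Mg G e > 0"
    and R_measurable: "R \<in> measurable M (count_space UNIV)"
    and R_le_N: "\<And>\<omega>. \<omega> \<in> space M \<Longrightarrow> R \<omega> \<le> N"
    and P_measurable: "\<And>j. j \<in> {1..N} \<Longrightarrow> P j \<in> measurable M (count_space UNIV)"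
    and model_D: "\<And>k e. k \<in> {1..N} \<Longrightarrow>
        measure M {\<omega> \<in> space M. R \<omega> = k \<and> (\<forall>j\<in>{1..N}. P j \<omega> = e j)}
        = pt_prob M R k * (pt_prob Ms S (e k) * (\<Prod>j\<in>{1..N} - {k}. pt_prob Mg G (e j)))"
    and model_0: "\<And>e.
        measure M {\<omega> \<in> space M. R \<omega> = 0 \<and> (\<forall>j\<in>{1..N}. P j \<omega> = e j)}
        = pt_prob M R 0 * (\<Prod>j\<in>{1..N}. pt_prob Mg G (e j))"
begin

definition evidence :: "(nat \<Rightarrow> real) \<Rightarrow> 'a set" where
  "evidence r = {\<omega> \<in> space M. \<forall>j\<in>{1..N}. LR Ms S Mg G (P j \<omega>) = r j}"

definition profiles :: "(nat \<Rightarrow> real) \<Rightarrow> (nat \<Rightarrow> 'e) set" where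
  "profiles r = Pi\<^sub>E {1..N} (\<lambda>j. {x. LR Ms S Mg G x = r j})"

definition profile_event :: "nat \<Rightarrow> (nat \<Rightarrow> 'e) \<Rightarrow> 'a set" where
  "profile_event k e = {\<omega> \<in> space M. R \<omega> = k \<and> (\<forall>j\<in>{1..N}. P j \<omega> = e j)}"

definition null_prob :: "(nat \<Rightarrow> 'e) \<Rightarrow> real" where
  "null_prob e = (\<Prod>j\<in>{1..N}. pt_prob Mg G (e j))"

definition weight :: "(nat \<Rightarrow> real) \<Rightarrow> nat \<Rightarrow> real" where
  "weight r k = (if k = 0 then 1 else r k) * pt_prob M R k"

definition evidence_mass :: "(nat \<Rightarrow> real) \<Rightarrow> real" where
  "evidence_mass r = enn2real (\<integral>\<^sup>+e. ennreal (null_prob e) \<partial>count_space (profiles r))"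

lemma profiles_countable: "countable (profiles r)"
  unfolding profiles_def by (rule countable_PiE) auto

lemma R_event_sets: "{\<omega> \<in> space M. R \<omega> = k} \<in> sets M"
  using R_measurable by measurable

lemma profile_event_sets: "profile_event k e \<in> sets M"
proof -
  have P_sets: "{\<omega> \<in> space M. P j \<omega> = e j} \<in> sets M" if "j \<in> {1..N}" for j
    using P_measurable[OF that] by measurable
  show ?thesis
    unfolding profile_event_def
    using R_event_sets P_sets by (intro sets.sets_Collect_conj sets.sets_Collect_finite_All) auto
qed

lemma profile_event_disjoint: "disjoint_family_on (profile_event k) (profiles r)"
  unfolding disjoint_family_on_def
proof (intro ballI impI)
  fix e1 e2 assume "e1 \<in> profiles r" "e2 \<in> profiles r" "e1 \<noteq> e2"
  then obtain j where "j \<in> {1..N}" "e1 j \<noteq> e2 j"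
    unfolding profiles_def by (metis PiE_ext)
  then show "profile_event k e1 \<inter> profile_event k e2 = {}"
    unfolding profile_event_def by auto
qed

lemma R_evidence_eq_UN:
  "{\<omega> \<in> space M. R \<omega> = k} \<inter> evidence r = (\<Union>e\<in>profiles r. profile_event k e)"
proof
  show "{\<omega> \<in> space M. R \<omega> = k} \<inter> evidence r \<subseteq> (\<Union>e\<in>profiles r. profile_event k e)"
  proof
    fix \<omega> assume \<omega>: "\<omega> \<in> {\<omega> \<in> space M. R \<omega> = k} \<inter> evidence r"
    let ?e = "restrict (\<lambda>j. P j \<omega>) {1..N}"
    have "?e \<in> profiles r" "\<omega> \<in> profile_event k ?e"
      using \<omega> unfolding evidence_def profiles_def profile_event_def by auto
    then show "\<omega> \<in> (\<Union>e\<in>profiles r. profile_event k e)" by blast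
  qed
  show "(\<Union>e\<in>profiles r. profile_event k e) \<subseteq> {\<omega> \<in> space M. R \<omega> = k} \<inter> evidence r"
    unfolding evidence_def profiles_def profile_event_def by auto
qed

(* Each compatible profile contributes weight r k * null_prob e: the S-factor of the
   source's entry is rewritten as r_k times its G-factor. *)
lemma measure_profile_event:
  assumes "e \<in> profiles r" and "k \<le> N"
  shows "measure M (profile_event k e) = weight r k * null_prob e"
proof (cases "k = 0")
  case True
  then show ?thesis
    using model_0[of e] unfolding profile_event_def weight_def null_prob_def by simp
next
  case False
  then have k: "k \<in> {1..N}" using assms(2) by auto
  have "LR Ms S Mg G (e k) = r k"
    using assms(1) k unfolding profiles_def by auto
  then have S_factor: "pt_prob Ms S (e k) = r k * pt_prob Mg G (e k)"
    using pt_prob_eq_LR_mult[of Ms S Mg G, OF S_abs_cont_G] by simp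
  have "null_prob e = pt_prob Mg G (e k) * (\<Prod>j\<in>{1..N} - {k}. pt_prob Mg G (e j))"
    unfolding null_prob_def using k by (simp add: prod.remove)
  then show ?thesis
    using model_D[OF k, of e] False unfolding profile_event_def weight_def S_factor
    by simp
qed

lemma R_evidence_sets: "{\<omega> \<in> space M. R \<omega> = k} \<inter> evidence r \<in> sets M"
  unfolding R_evidence_eq_UN using profiles_countable profile_event_sets
  by (intro sets.countable_UN'') auto

lemma evidence_nonneg:
  assumes "evidence r \<noteq> {}" and "j \<in> {1..N}"
  shows "r j \<ge> 0"
proof -
  obtain \<omega> where "\<omega> \<in> evidence r" using assms(1) by blast
  then have "r j = LR Ms S Mg G (P j \<omega>)" using assms(2) unfolding evidence_def by simp
  then show ?thesis using LR_nonneg by simp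
qed

lemma measure_R_evidence:
  assumes "evidence r \<noteq> {}" and "k \<le> N"
  shows "measure M ({\<omega> \<in> space M. R \<omega> = k} \<inter> evidence r) = weight r k * evidence_mass r"
proof -
  have "weight r k \<ge> 0"
    using evidence_nonneg[OF assms(1)] assms(2)
    unfolding weight_def by (simp add: pt_prob_nonneg)
  then show ?thesis
    unfolding R_evidence_eq_UN evidence_mass_def
    using profiles_countable profile_event_sets profile_event_disjoint measure_profile_event assms(2)
    by (intro measure_countable_UN_scaled)
       (auto simp: null_prob_def pt_prob_nonneg prod_nonneg)
qed

lemma measure_R_in_evidence:
  assumes "evidence r \<noteq> {}" and "K \<subseteq> {0..N}"
  shows "measure M ({\<omega> \<in> space M. R \<omega> \<in> K} \<inter> evidence r)
       = (\<Sum>k\<in>K. weight r k) * evidence_mass r"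
proof -
  have "finite K" using assms(2) finite_subset by blast
  have "measure M ({\<omega> \<in> space M. R \<omega> \<in> K} \<inter> evidence r)
      = measure M (\<Union>k\<in>K. {\<omega> \<in> space M. R \<omega> = k} \<inter> evidence r)"
    by (rule arg_cong[where f = "measure M"]) auto
  also have "\<dots> = (\<Sum>k\<in>K. measure M ({\<omega> \<in> space M. R \<omega> = k} \<inter> evidence r))"
    using \<open>finite K\<close> R_evidence_sets
    by (intro finite_measure_finite_Union) (auto simp: disjoint_family_on_def)
  also have "\<dots> = (\<Sum>k\<in>K. weight r k) * evidence_mass r"
    using measure_R_evidence[OF assms(1)] assms(2)
    by (auto simp: sum_distrib_right intro!: sum.cong)
  finally show ?thesis .
qed

lemma measure_R_neq: "measure M {\<omega> \<in> space M. R \<omega> \<noteq> i} = 1 - pt_prob M R i"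
proof -
  have "{\<omega> \<in> space M. R \<omega> \<noteq> i} = space M - {\<omega> \<in> space M. R \<omega> = i}" by auto
  then show ?thesis using prob_compl[OF R_event_sets] unfolding pt_prob_def by simp
qed

lemma evidence_mass_nonzero:
  assumes "measure M (evidence r) > 0"
  shows "evidence_mass r \<noteq> 0"
proof -
  have ne: "evidence r \<noteq> {}" using assms by auto
  have "measure M (evidence r) = measure M ({\<omega> \<in> space M. R \<omega> \<in> {0..N}} \<inter> evidence r)"
    using R_le_N unfolding evidence_def by (intro arg_cong[where f = "measure M"]) auto
  also have "\<dots> = (\<Sum>k\<in>{0..N}. weight r k) * evidence_mass r"
    by (rule measure_R_in_evidence[OF ne]) simp
  finally have "measure M (evidence r) = (\<Sum>k\<in>{0..N}. weight r k) * evidence_mass r" .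
  then show ?thesis using assms by auto
qed

lemma measure_R_eq_evidence:
  assumes "evidence r \<noteq> {}" and "i \<le> N"
  shows "measure M ({\<omega> \<in> space M. R \<omega> = i} \<inter> evidence r) = weight r i * evidence_mass r"
  using measure_R_in_evidence[OF assms(1), of "{i}"] assms(2) by simp

lemma measure_R_neq_evidence:
  assumes "evidence r \<noteq> {}"
  shows "measure M ({\<omega> \<in> space M. R \<omega> \<noteq> i} \<inter> evidence r)
       = (\<Sum>k\<in>{0..N} - {i}. weight r k) * evidence_mass r"
proof -
  have "{\<omega> \<in> space M. R \<omega> \<noteq> i} \<inter> evidence r
      = {\<omega> \<in> space M. R \<omega> \<in> {0..N} - {i}} \<inter> evidence r"
    using R_le_N unfolding evidence_def by auto
  then show ?thesis using measure_R_in_evidence[OF assms, of "{0..N} - {i}"] by simp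
qed

lemma posterior_odds:
  assumes "measure M (evidence r) > 0" and "i \<le> N"
  shows "cprob M {\<omega> \<in> space M. R \<omega> = i} (evidence r) / cprob M {\<omega> \<in> space M. R \<omega> \<noteq> i} (evidence r)
       = weight r i / (\<Sum>k\<in>{0..N} - {i}. weight r k)"
proof -
  have ne: "evidence r \<noteq> {}" using assms(1) by auto
  have "cprob M {\<omega> \<in> space M. R \<omega> = i} (evidence r) / cprob M {\<omega> \<in> space M. R \<omega> \<noteq> i} (evidence r)
      = (weight r i * evidence_mass r) / ((\<Sum>k\<in>{0..N} - {i}. weight r k) * evidence_mass r)"
    using assms by (simp add: cprob_ratio_same_condition measure_R_eq_evidence[OF ne]
                              measure_R_neq_evidence[OF ne])
  then show ?thesis using evidence_mass_nonzero[OF assms(1)] by simp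
qed

(* Likelihood ratio in favour of source i: conditioning on R = i and on R \<noteq> i divides
   the joint probabilities by pi_i and 1 - pi_i respectively. *)
lemma likelihood_ratio:
  assumes "measure M (evidence r) > 0" and "i \<in> {1..N}"
    and "0 < pt_prob M R i" and "pt_prob M R i < 1"
  shows "cprob M (evidence r) {\<omega> \<in> space M. R \<omega> = i} / cprob M (evidence r) {\<omega> \<in> space M. R \<omega> \<noteq> i}
       = r i * (1 - pt_prob M R i) / (\<Sum>k\<in>{0..N} - {i}. weight r k)"
proof -
  have ne: "evidence r \<noteq> {}" using assms(1) by auto
  let ?\<pi> = "pt_prob M R i" and ?q = "evidence_mass r" and ?s = "\<Sum>k\<in>{0..N} - {i}. weight r k"
  have "cprob M (evidence r) {\<omega> \<in> space M. R \<omega> = i} / cprob M (evidence r) {\<omega> \<in> space M. R \<omega> \<noteq> i}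
      = (r i * ?\<pi> * ?q / ?\<pi>) / (?s * ?q / (1 - ?\<pi>))"
    using assms(2) unfolding cprob_def measure_R_neq Int_commute[of "evidence r"]
    by (simp add: measure_R_eq_evidence[OF ne] measure_R_neq_evidence[OF ne] weight_def pt_prob_def)
  also have "\<dots> = r i * (1 - ?\<pi>) / ?s"
    using assms(3,4) evidence_mass_nonzero[OF assms(1)]
    by (cases "?s = 0") (simp_all add: field_simps)
  finally show ?thesis .
qed

lemma weight_alternatives:
  assumes "i \<in> {1..N}"
  shows "(\<Sum>k\<in>{0..N} - {i}. weight r k) = (\<Sum>k\<in>{1..N} - {i}. r k * pt_prob M R k) + pt_prob M R 0"
proof -
  have "{0..N} - {i} = insert 0 ({1..N} - {i})" using assms by auto
  then show ?thesis unfolding weight_def by (simp add: add.commute)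
qed

end

theorem mainTheorem2:
  fixes Ms :: "'b measure" and S :: "'b \<Rightarrow> 'e::countable"
    and Mg :: "'c measure" and G :: "'c \<Rightarrow> 'e"
    and M :: "'a measure" and R :: "'a \<Rightarrow> nat" and P :: "nat \<Rightarrow> 'a \<Rightarrow> 'e"
    and N :: nat and r :: "nat \<Rightarrow> real" and i :: nat
  assumes "prob_space Ms" and "S \<in> measurable Ms (count_space UNIV)"
    and "prob_space Mg" and "G \<in> measurable Mg (count_space UNIV)"
    and SG: "\<And>e. pt_prob Ms S e > 0 \<Longrightarrow> pt_prob Mg G e > 0"
    and "prob_space M" and "N \<ge> 1"
    and "R \<in> measurable M (count_space UNIV)"
    and "\<And>\<omega>. \<omega> \<in> space M \<Longrightarrow> R \<omega> \<le> N"
    and "\<And>j. j \<in> {1..N} \<Longrightarrow> P j \<in> measurable M (count_space UNIV)"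
    and model_D: "\<And>k (e :: nat \<Rightarrow> 'e). k \<in> {1..N} \<Longrightarrow>
        measure M {\<omega> \<in> space M. R \<omega> = k \<and> (\<forall>j\<in>{1..N}. P j \<omega> = e j)}
        = pt_prob M R k * (pt_prob Ms S (e k) * (\<Prod>j\<in>{1..N} - {k}. pt_prob Mg G (e j)))"
    and model_0: "\<And>(e :: nat \<Rightarrow> 'e).
        measure M {\<omega> \<in> space M. R \<omega> = 0 \<and> (\<forall>j\<in>{1..N}. P j \<omega> = e j)}
        = pt_prob M R 0 * (\<Prod>j\<in>{1..N}. pt_prob Mg G (e j))"
    and pos: "measure M {\<omega> \<in> space M. \<forall>j\<in>{1..N}. LR Ms S Mg G (P j \<omega>) = r j} > 0"
    and "i \<in> {1..N}" and "0 < pt_prob M R i" and "pt_prob M R i < 1"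
  shows "let B = {\<omega> \<in> space M. \<forall>j\<in>{1..N}. LR Ms S Mg G (P j \<omega>) = r j};
             Ri = {\<omega> \<in> space M. R \<omega> = i};
             Rni = {\<omega> \<in> space M. R \<omega> \<noteq> i};
             \<pi> = pt_prob M R;
             r0 = (\<lambda>k. if k = 0 then 1 else r k)
         in cprob M Ri B / cprob M Rni B
              = r0 i * \<pi> i / (\<Sum>k\<in>{0..N} - {i}. r0 k * \<pi> k)
          \<and> ((cprob M B Rni \<noteq> 0 \<and> (\<Sum>k\<in>{1..N} - {i}. r k * \<pi> k) + \<pi> 0 \<noteq> 0) \<longrightarrow>
              cprob M B Ri / cprob M B Rni
              = r i * (1 - \<pi> i) / ((\<Sum>k\<in>{1..N} - {i}. r k * \<pi> k) + \<pi> 0))"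
proof -
  interpret database_model M Ms S Mg G R P N
    by (intro database_model.intro database_model_axioms.intro) (fact assms)+
  have evidence_pos: "measure M (evidence r) > 0"
    using pos unfolding evidence_def .
  have i: "i \<in> {1..N}" by fact
  show ?thesis
    using posterior_odds[OF evidence_pos, of i] i
      likelihood_ratio[OF evidence_pos i \<open>0 < pt_prob M R i\<close> \<open>pt_prob M R i < 1\<close>]
    unfolding Let_def evidence_def[symmetric] weight_alternatives[OF i, symmetric]
    by (simp add: weight_def)
qed

end
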